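(* Let $\varepsilon>0$, $w>0$, $\delta>0$, and run $\textsc{ApproxGeneral}(\varepsilon,\delta,w)$ with any $(1+w)$-approximate oracle. Then for every $i=1,\dots,\tau$, $$\alpha^L(i)\le\delta L\,e^{\varepsilon(1+w)f_i/\beta}.$$
   Context: Let $G=(V,E)$ be a finite directed graph with capacities $c:E\to\mathbb{R}_{>0}$, edge lengths $\ell:E\to\mathbb{Z}_{\ge1}$, distinct vertices $s,t$, and a positive integer $L$. Let $\mathcal{P}_L$ be the set of directed simple $s$-$t$ paths $P$ with $\ell(P)=\sum_{e\in P}\ell(e)\le L$, and assume $\mathcal{P}_L\ne\emptyset$. For $y:E\to\mathbb{R}_{\ge0}$ let $y(P)=\sum_{e\in P}y(e)$ and $d^L_y(s,t)=\min_{P\in\mathcal{P}_L}y(P)$. Let $\beta$ be the optimum of the LP $\min\{\sum_e c(e)y(e): y\ge0,\ y(P)\ge1\ \forall P\in\mathcal{P}_L\}$. A $(1+w)$-approximate oracle ($w>0$) is a map $\mathcal{O}$ assigning to each $y:E\to\mathbb{R}_{\ge0}$ a path $\mathcal{O}(y)\in\mathcal{P}_L$ with $y(\mathcal{O}(y))\le(1+w)\,d^L_y(s,t)$. Algorithm $\textsc{ApproxGeneral}(\varepsilon,\delta,w)$: - Initialize $i=0$, $y_0\equiv\delta$, and $x_0\equiv0$. Let $\alpha^L(i)=d^L_{y_i}(s,t)$ and $\bar\alpha^L(i)=y_i(\mathcal{O}(y_i))$. - While $\bar\alpha^L(i)<1+w$: - set $i\leftarrow i+1$; - let $P_i=\mathcal{O}(y_{i-1})$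 and $c_i=\min_{e\in P_i}c(e)$; - set $x_i=x_{i-1}$ except $x_i(P_i)=x_{i-1}(P_i)+c_i$; - set $y_i(e)=y_{i-1}(e)(1+\varepsilon c_i/c(e))$ for $e\in P_i$, and $y_i(e)=y_{i-1}(e)$ otherwise. - Return $x_i$. $\tau$ is the number of iterations, and $f_i=\sum_Px_i(P)$. *)

theory Defs
  imports Complex_Main
begin

definition is_st_path ::
  "'e set \<Rightarrow> ('e \<Rightarrow> 'v) \<Rightarrow> ('e \<Rightarrow> 'v) \<Rightarrow> 'v \<Rightarrow> 'v \<Rightarrow> 'e list \<Rightarrow> bool" where
  "is_st_path E src dst s t P \<longleftrightarrow>
     P \<noteq> [] \<and> set P \<subseteq> E \<and>
     src (hd P) = s \<and> dst (last P) = t \<and>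
     (\<forall>k. Suc k < length P \<longrightarrow> dst (P ! k) = src (P ! Suc k)) \<and>
     distinct (map src P @ [dst (last P)])"

definition paths_L ::
  "'e set \<Rightarrow> ('e \<Rightarrow> 'v) \<Rightarrow> ('e \<Rightarrow> 'v) \<Rightarrow> 'v \<Rightarrow> 'v \<Rightarrow> ('e \<Rightarrow> nat) \<Rightarrow> nat \<Rightarrow> 'e list set" where
  "paths_L E src dst s t len L =
     {P. is_st_path E src dst s t P \<and> (\<Sum>e\<leftarrow>P. len e) \<le> L}"

definition pweight :: "('e \<Rightarrow> real) \<Rightarrow> 'e list \<Rightarrow> real" where
  "pweight y P = (\<Sum>e\<leftarrow>P. y e)"

definition distL :: "'e list set \<Rightarrow> ('e \<Rightarrow> real) \<Rightarrow> real" where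
  "distL PL y = Min (pweight y ` PL)"

definition lp_beta :: "'e set \<Rightarrow> ('e \<Rightarrow> real) \<Rightarrow> 'e list set \<Rightarrow> real" where
  "lp_beta E c PL = Inf {(\<Sum>e\<in>E. c e * y e) | y.
      (\<forall>e\<in>E. 0 \<le> y e) \<and> (\<forall>P\<in>PL. 1 \<le> pweight y P)}"

definition approx_oracle ::
  "'e set \<Rightarrow> 'e list set \<Rightarrow> real \<Rightarrow> (('e \<Rightarrow> real) \<Rightarrow> 'e list) \<Rightarrow> bool" where
  "approx_oracle E PL w orc \<longleftrightarrow>
     (\<forall>y. (\<forall>e\<in>E. 0 \<le> y e) \<longrightarrow>
        orc y \<in> PL \<and> pweight y (orc y) \<le> (1 + w) * distL PL y)"

definition bottleneck :: "('e \<Rightarrow> real) \<Rightarrow> 'e list \<Rightarrow> real" where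
  "bottleneck c P = Min (c ` set P)"

fun ag_y :: "('e \<Rightarrow> real) \<Rightarrow> (('e \<Rightarrow> real) \<Rightarrow> 'e list) \<Rightarrow> real \<Rightarrow> real \<Rightarrow> nat \<Rightarrow> 'e \<Rightarrow> real" where
  "ag_y c orc eps delta 0 = (\<lambda>e. delta)"
| "ag_y c orc eps delta (Suc i) =
     (let y = ag_y c orc eps delta i; P = orc y; ci = bottleneck c P in
      (\<lambda>e. if e \<in> set P then y e * (1 + eps * ci / c e) else y e))"

fun ag_x :: "('e \<Rightarrow> real) \<Rightarrow> (('e \<Rightarrow> real) \<Rightarrow> 'e list) \<Rightarrow> real \<Rightarrow> real \<Rightarrow> nat \<Rightarrow> 'e list \<Rightarrow> real" where
  "ag_x c orc eps delta 0 = (\<lambda>P. 0)"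
| "ag_x c orc eps delta (Suc i) =
     (let x = ag_x c orc eps delta i; P = orc (ag_y c orc eps delta i) in
      x(P := x P + bottleneck c P))"

end

theory Submission
  imports Defs
begin

text \<open>
  Let \<open>D(j) = \<Sum>\<^sub>e c(e) y\<^sub>j(e)\<close>. Scaling \<open>y\<^sub>j - \<delta>\<close> into a feasible point of the LP gives
  \<open>\<alpha>(j) \<le> \<delta>L + (D(j) - D(0))/\<beta>\<close>, and each iteration raises \<open>D\<close> by
  \<open>\<epsilon> c\<^sub>j y\<^sub>j(P\<^sub>j) \<le> \<epsilon>(1+w) c\<^sub>j \<alpha>(j)\<close>. Hence
  \<open>\<alpha>(j) \<le> \<delta>L + \<epsilon>(1+w)/\<beta> \<Sum>\<^sub>k\<^sub><\<^sub>j c\<^sub>k \<alpha>(k)\<close>, and a discrete Gronwall argument,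
  using \<open>1 + x \<le> e\<^sup>x\<close>, turns this into the exponential bound since \<open>f\<^sub>j = \<Sum>\<^sub>k\<^sub><\<^sub>j c\<^sub>k\<close>.
\<close>

lemma discrete_gronwall:
  fixes \<alpha> b :: "nat \<Rightarrow> real"
  assumes "0 \<le> A" "0 \<le> a" "\<And>k. 0 \<le> b k"
    and rec: "\<And>j. \<alpha> j \<le> A + a * (\<Sum>k<j. b k * \<alpha> k)"
  shows "\<alpha> j \<le> A * exp (a * (\<Sum>k<j. b k))"
proof -
  define z where "z j = A + a * (\<Sum>k<j. b k * \<alpha> k)" for j
  have "z j \<le> A * exp (a * (\<Sum>k<j. b k))" for j
  proof (induction j)
    case 0
    then show ?case by (simp add: z_def)
  next
    case (Suc j)
    have ab: "0 \<le> a * b j" using assms by simp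
    have "a * b j * \<alpha> j \<le> a * b j * z j"
      using rec[of j] ab by (intro mult_left_mono) (simp_all add: z_def)
    then have "z (Suc j) \<le> z j * (1 + a * b j)" by (simp add: z_def algebra_simps)
    also have "\<dots> \<le> A * exp (a * (\<Sum>k<j. b k)) * exp (a * b j)"
      using Suc ab \<open>0 \<le> A\<close> by (intro mult_mono exp_ge_add_one_self_aux) auto
    also have "\<dots> = A * exp (a * (\<Sum>k<Suc j. b k))"
      by (simp add: exp_add[symmetric] algebra_simps)
    finally show ?case .
  qed
  then show ?thesis using rec[of j] by (simp add: z_def order_trans)
qed

lemma pweight_distinct: "distinct P \<Longrightarrow> pweight y P = sum y (set P)"
  by (simp add: pweight_def sum_list_distinct_conv_sum_set)

lemma paths_L_wellformed:
  assumes "\<forall>e\<in>E. 1 \<le> len e" and "P \<in> paths_L E src dst s t len L"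
  shows "P \<noteq> [] \<and> set P \<subseteq> E \<and> distinct P \<and> length P \<le> L"
proof -
  from assms(2) have path: "is_st_path E src dst s t P" and short: "(\<Sum>e\<leftarrow>P. len e) \<le> L"
    by (auto simp: paths_L_def)
  then have "P \<noteq> []" "set P \<subseteq> E" "distinct (map src P)"
    by (auto simp: is_st_path_def)
  moreover have "length P \<le> (\<Sum>e\<leftarrow>P. len e)"
    using sum_list_mono[of P "\<lambda>_. 1" len] \<open>set P \<subseteq> E\<close> assms(1)
    by (auto simp: sum_list_triv)
  ultimately show ?thesis using short by (simp add: distinct_map)
qed

lemma finite_paths_L:
  assumes "finite E" and "\<forall>e\<in>E. 1 \<le> len e"
  shows "finite (paths_L E src dst s t len L)"
proof (rule finite_subset)
  show "paths_L E src dst s t len L \<subseteq> {P. set P \<subseteq> E \<and> length P \<le> L}"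
    by (auto dest: paths_L_wellformed[OF assms(2)])
  show "finite {P. set P \<subseteq> E \<and> length P \<le> L}"
    using assms(1) by (rule finite_lists_length_le)
qed

locale path_lp =
  fixes E :: "'e set" and c :: "'e \<Rightarrow> real" and PL :: "'e list set"
  assumes finite_E: "finite E"
    and c_pos: "\<And>e. e \<in> E \<Longrightarrow> 0 < c e"
    and finite_PL: "finite PL"
    and PL_nonempty: "PL \<noteq> {}"
    and path_nonempty: "\<And>P. P \<in> PL \<Longrightarrow> P \<noteq> []"
    and path_edges: "\<And>P. P \<in> PL \<Longrightarrow> set P \<subseteq> E"
    and path_distinct: "\<And>P. P \<in> PL \<Longrightarrow> distinct P"
begin

lemma distL_le: "Q \<in> PL \<Longrightarrow> distL PL y \<le> pweight y Q"
  unfolding distL_def using finite_PL by (intro Min_le) auto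

lemma distL_attained: "\<exists>Q\<in>PL. distL PL y = pweight y Q"
proof -
  have "Min (pweight y ` PL) \<in> pweight y ` PL"
    using finite_PL PL_nonempty by (intro Min_in) auto
  then show ?thesis unfolding distL_def by blast
qed

lemma cost_nonneg: "\<forall>e\<in>E. 0 \<le> y e \<Longrightarrow> 0 \<le> (\<Sum>e\<in>E. c e * y e)"
  using c_pos by (intro sum_nonneg) (simp add: less_imp_le)

lemma lp_beta_le:
  assumes "\<forall>e\<in>E. 0 \<le> y e" and "\<forall>P\<in>PL. 1 \<le> pweight y P"
  shows "lp_beta E c PL \<le> (\<Sum>e\<in>E. c e * y e)"
  unfolding lp_beta_def
proof (rule cInf_lower)
  show "bdd_below {\<Sum>e\<in>E. c e * y e |y. (\<forall>e\<in>E. 0 \<le> y e) \<and> (\<forall>P\<in>PL. 1 \<le> pweight y P)}"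
    using cost_nonneg by (intro bdd_belowI[of _ 0]) auto
qed (use assms in blast)

text \<open>Every feasible point costs at least the smallest capacity, since it puts weight \<open>\<ge> 1\<close>
  on some path.\<close>
lemma lp_beta_pos: "0 < lp_beta E c PL"
proof -
  obtain P0 where P0: "P0 \<in> PL" using PL_nonempty by auto
  define cmin where "cmin = Min (c ` E)"
  have "E \<noteq> {}" using path_nonempty[OF P0] path_edges[OF P0] by (cases P0) auto
  then have cmin_pos: "0 < cmin" using finite_E c_pos by (simp add: cmin_def)
  have cmin_le: "e \<in> E \<Longrightarrow> cmin \<le> c e" for e using finite_E by (simp add: cmin_def)
  have feasible_one: "\<forall>P\<in>PL. 1 \<le> pweight (\<lambda>_. 1) P"
  proof
    fix P assume P: "P \<in> PL"
    then have "1 \<le> card (set P)" using path_nonempty by (simp add: Suc_le_eq card_gt_0_iff)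
    then show "1 \<le> pweight (\<lambda>_. 1) P" by (simp add: pweight_distinct path_distinct[OF P])
  qed
  have "cmin \<le> lp_beta E c PL"
    unfolding lp_beta_def
  proof (rule cInf_greatest)
    show "{\<Sum>e\<in>E. c e * y e |y. (\<forall>e\<in>E. 0 \<le> y e) \<and> (\<forall>P\<in>PL. 1 \<le> pweight y P)} \<noteq> {}"
      using feasible_one by (auto intro!: exI[of _ "\<lambda>_. 1"])
  next
    fix x assume "x \<in> {\<Sum>e\<in>E. c e * y e |y. (\<forall>e\<in>E. 0 \<le> y e) \<and> (\<forall>P\<in>PL. 1 \<le> pweight y P)}"
    then obtain y where x: "x = (\<Sum>e\<in>E. c e * y e)" and y_nonneg: "\<forall>e\<in>E. 0 \<le> y e"
      and feasible: "\<forall>P\<in>PL. 1 \<le> pweight y P" by auto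
    have "cmin \<le> cmin * pweight y P0" using feasible P0 cmin_pos by simp
    also have "\<dots> = (\<Sum>e\<in>set P0. cmin * y e)"
      using path_distinct[OF P0] by (simp add: pweight_distinct sum_distrib_left)
    also have "\<dots> \<le> (\<Sum>e\<in>E. cmin * y e)"
      using path_edges[OF P0] finite_E y_nonneg cmin_pos by (intro sum_mono2) auto
    also have "\<dots> \<le> x"
      unfolding x using y_nonneg cmin_le by (intro sum_mono mult_right_mono) auto
    finally show "cmin \<le> x" .
  qed
  with cmin_pos show ?thesis by simp
qed

lemma distL_mult_lp_beta_le:
  assumes y_nonneg: "\<forall>e\<in>E. 0 \<le> y e"
  shows "distL PL y * lp_beta E c PL \<le> (\<Sum>e\<in>E. c e * y e)"
proof -
  define d where "d = distL PL y"
  obtain Q where "Q \<in> PL" and d: "d = pweight y Q"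
    using distL_attained unfolding d_def by blast
  have "0 \<le> d"
    using path_edges[OF \<open>Q \<in> PL\<close>] path_distinct[OF \<open>Q \<in> PL\<close>] y_nonneg
    by (auto simp: d pweight_distinct intro!: sum_nonneg)
  show ?thesis
  proof (cases "d = 0")
    case True
    then show ?thesis
      using cost_nonneg[OF y_nonneg] by (simp add: d_def)
  next
    case False
    with \<open>0 \<le> d\<close> have "0 < d" by simp
    have "lp_beta E c PL \<le> (\<Sum>e\<in>E. c e * (y e / d))"
    proof (rule lp_beta_le)
      show "\<forall>e\<in>E. 0 \<le> y e / d" using y_nonneg \<open>0 < d\<close> by simp
      show "\<forall>P\<in>PL. 1 \<le> pweight (\<lambda>e. y e / d) P"
      proof
        fix P assume "P \<in> PL"
        then have "d \<le> pweight y P" unfolding d_def by (rule distL_le)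
        then show "1 \<le> pweight (\<lambda>e. y e / d) P"
          using \<open>0 < d\<close> path_distinct[OF \<open>P \<in> PL\<close>]
          by (simp add: pweight_distinct sum_divide_distrib[symmetric])
      qed
    qed
    also have "\<dots> = (\<Sum>e\<in>E. c e * y e) / d" by (simp add: sum_divide_distrib)
    finally show ?thesis using \<open>0 < d\<close> by (simp add: d_def field_simps)
  qed
qed

lemma distL_le_shifted_cost:
  assumes short: "\<forall>P\<in>PL. length P \<le> L"
    and "0 \<le> \<delta>" and ge: "\<forall>e\<in>E. \<delta> \<le> y e"
  shows "distL PL y \<le> \<delta> * L + (\<Sum>e\<in>E. c e * (y e - \<delta>)) / lp_beta E c PL"
proof -
  define y' where "y' e = y e - \<delta>" for e
  obtain Q where Q: "Q \<in> PL" and dQ: "distL PL y' = pweight y' Q"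
    using distL_attained by blast
  have "distL PL y \<le> pweight y Q" using Q by (rule distL_le)
  also have "\<dots> = pweight y' Q + \<delta> * length Q"
    using path_distinct[OF Q] by (simp add: pweight_distinct y'_def sum_subtractf distinct_card)
  also have "\<dots> \<le> distL PL y' + \<delta> * L"
    using short Q \<open>0 \<le> \<delta>\<close> by (simp add: dQ mult_left_mono)
  also have "distL PL y' \<le> (\<Sum>e\<in>E. c e * y' e) / lp_beta E c PL"
    using distL_mult_lp_beta_le[of y'] ge lp_beta_pos by (simp add: y'_def field_simps)
  finally show ?thesis by (simp add: y'_def)
qed

end

locale approx_general = path_lp E c PL
  for E :: "'e set" and c :: "'e \<Rightarrow> real" and PL :: "'e list set" +
  fixes w eps delta :: real and orc :: "('e \<Rightarrow> real) \<Rightarrow> 'e list"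
  assumes orc_approx: "approx_oracle E PL w orc"
    and w_nonneg: "0 \<le> w" and eps_nonneg: "0 \<le> eps" and delta_nonneg: "0 \<le> delta"
begin

abbreviation y :: "nat \<Rightarrow> 'e \<Rightarrow> real" where
  "y \<equiv> ag_y c orc eps delta"

abbreviation path :: "nat \<Rightarrow> 'e list" where
  "path j \<equiv> orc (y j)"

abbreviation cap :: "nat \<Rightarrow> real" where
  "cap j \<equiv> bottleneck c (path j)"

abbreviation cost :: "nat \<Rightarrow> real" where
  "cost j \<equiv> \<Sum>e\<in>E. c e * y j e"

lemma ag_y_Suc:
  "y (Suc j) e = (if e \<in> set (path j) then y j e * (1 + eps * cap j / c e) else y j e)"
  by (simp add: Let_def)

declare ag_y.simps(2) [simp del]

lemma orc_in_PL: "\<forall>e\<in>E. 0 \<le> z e \<Longrightarrow> orc z \<in> PL"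
  using orc_approx by (simp add: approx_oracle_def)

lemma bottleneck_orc_pos: "\<forall>e\<in>E. 0 \<le> z e \<Longrightarrow> 0 < bottleneck c (orc z)"
  using orc_in_PL path_nonempty path_edges c_pos by (fastforce simp: bottleneck_def)

lemma ag_y_ge_delta: "e \<in> E \<Longrightarrow> delta \<le> y j e"
proof (induction j arbitrary: e)
  case 0
  then show ?case by simp
next
  case (Suc j)
  have nonneg: "\<forall>e\<in>E. 0 \<le> y j e" using Suc.IH delta_nonneg by (meson order_trans)
  then have "0 < cap j" by (rule bottleneck_orc_pos)
  then have "0 \<le> eps * cap j / c e" using eps_nonneg c_pos[OF Suc.prems] by simp
  then have "y j e * 1 \<le> y j e * (1 + eps * cap j / c e)"
    using nonneg Suc.prems by (intro mult_left_mono) auto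
  then have "y j e \<le> y (Suc j) e" by (simp add: ag_y_Suc)
  then show ?case using Suc.IH[OF Suc.prems] by linarith
qed

lemma ag_y_nonneg: "\<forall>e\<in>E. 0 \<le> y j e"
  using ag_y_ge_delta delta_nonneg order_trans by blast

lemma path_in_PL: "path j \<in> PL"
  and cap_pos: "0 < cap j"
  using orc_in_PL bottleneck_orc_pos ag_y_nonneg by auto

lemma cost_Suc: "cost (Suc j) = cost j + eps * cap j * pweight (y j) (path j)"
proof -
  have edges: "set (path j) \<subseteq> E" and "distinct (path j)"
    using path_in_PL path_edges path_distinct by auto
  have "c e * y (Suc j) e = c e * y j e + (if e \<in> set (path j) then eps * cap j * y j e else 0)"
    if "e \<in> E" for e
    using c_pos[OF that] by (simp add: ag_y_Suc field_simps)
  then have "cost (Suc j) =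
      (\<Sum>e\<in>E. c e * y j e + (if e \<in> set (path j) then eps * cap j * y j e else 0))"
    by (rule sum.cong[OF refl])
  also have "\<dots> = cost j + (\<Sum>e\<in>set (path j). eps * cap j * y j e)"
    using edges
    by (simp add: sum.distrib flip: sum.inter_restrict[OF finite_E]) (simp add: Int_absorb1)
  finally show ?thesis
    using \<open>distinct (path j)\<close> by (simp add: pweight_distinct sum_distrib_left)
qed

lemma cost_growth: "cost j - cost 0 \<le> eps * (1 + w) * (\<Sum>k<j. cap k * distL PL (y k))"
proof (induction j)
  case 0
  then show ?case by simp
next
  case (Suc j)
  have "pweight (y j) (path j) \<le> (1 + w) * distL PL (y j)"
    using orc_approx ag_y_nonneg by (simp add: approx_oracle_def)
  then have "eps * cap j * pweight (y j) (path j) \<le> eps * cap j * ((1 + w) * distL PL (y j))"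
    using eps_nonneg cap_pos[of j] by (intro mult_left_mono) auto
  with Suc show ?case by (simp add: cost_Suc algebra_simps)
qed

lemma sum_ag_x: "(\<Sum>P\<in>PL. ag_x c orc eps delta j P) = (\<Sum>k<j. cap k)"
proof (induction j)
  case 0
  then show ?case by simp
next
  case (Suc j)
  then show ?case using finite_PL path_in_PL[of j] by (simp add: Let_def sum.remove)
qed

lemma distL_ag_y_le:
  assumes short: "\<forall>P\<in>PL. length P \<le> L"
  shows "distL PL (y j) \<le> delta * L *
           exp (eps * (1 + w) * (\<Sum>P\<in>PL. ag_x c orc eps delta j P) / lp_beta E c PL)"
proof -
  define a where "a = eps * (1 + w) / lp_beta E c PL"
  have "0 \<le> a" using eps_nonneg w_nonneg lp_beta_pos by (simp add: a_def)
  have "distL PL (y k) \<le> delta * L + a * (\<Sum>i<k. cap i * distL PL (y i))" for k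
  proof -
    have "cost k - cost 0 = (\<Sum>e\<in>E. c e * (y k e - delta))"
      by (simp add: sum_subtractf algebra_simps)
    then have "distL PL (y k) \<le> delta * L + (cost k - cost 0) / lp_beta E c PL"
      using distL_le_shifted_cost[OF short delta_nonneg] ag_y_ge_delta by simp
    also have "\<dots> \<le> delta * L + a * (\<Sum>i<k. cap i * distL PL (y i))"
      using cost_growth[of k] lp_beta_pos by (simp add: a_def divide_right_mono)
    finally show ?thesis .
  qed
  then have "distL PL (y j) \<le> delta * L * exp (a * (\<Sum>k<j. cap k))"
    using \<open>0 \<le> a\<close> delta_nonneg cap_pos by (intro discrete_gronwall) (auto intro: less_imp_le)
  then show ?thesis by (simp add: sum_ag_x a_def)
qed

end

theorem mainTheorem8:
  fixes E :: "'e set" and src dst :: "'e \<Rightarrow> 'v" and s t :: 'v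
    and c :: "'e \<Rightarrow> real" and len :: "'e \<Rightarrow> nat" and L :: nat
    and orc :: "('e \<Rightarrow> real) \<Rightarrow> 'e list"
    and eps w delta :: real and i :: nat
  assumes "finite E"
    and "\<forall>e\<in>E. 0 < c e"
    and "\<forall>e\<in>E. 1 \<le> len e"
    and "s \<noteq> t" and "0 < L"
    and "paths_L E src dst s t len L \<noteq> {}"
    and "0 < eps" and "0 < w" and "0 < delta"
    and "approx_oracle E (paths_L E src dst s t len L) w orc"
    and "1 \<le> i"
    and "\<forall>j<i. pweight (ag_y c orc eps delta j) (orc (ag_y c orc eps delta j)) < 1 + w"
  shows "distL (paths_L E src dst s t len L) (ag_y c orc eps delta i)
           \<le> delta * real L *
             exp (eps * (1 + w) * (\<Sum>P\<in>paths_L E src dst s t len L. ag_x c orc eps delta i P)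
                  / lp_beta E c (paths_L E src dst s t len L))"
proof -
  \<comment> \<open>The bound holds at every iteration.\<close>
  let ?PL = "paths_L E src dst s t len L"
  have wellformed: "P \<noteq> [] \<and> set P \<subseteq> E \<and> distinct P \<and> length P \<le> L" if "P \<in> ?PL" for P
    using assms(3) that by (rule paths_L_wellformed)
  interpret approx_general E c ?PL w eps delta orc
  proof
    show "finite ?PL" using assms(1,3) by (rule finite_paths_L)
  qed (use assms(1,2,6-10) wellformed in auto)
  show ?thesis using distL_ag_y_le wellformed by blast
qed

end
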